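(* Let $S_n^0$ be the set of elements of $S_n$ all of whose coordinates are nonzero (i.e. $S_n^0=\{s\in\{-1,1\}^n: s_1=1\}$). Then $S_n^0$ is a minimal element (with respect to inclusion) of the poset $\mathcal{E}_n=\{X\subseteq S_n:\mathrm{Elim}(X)=S_n\}$; that is, $\mathrm{Elim}(S_n^0)=S_n$ and $\mathrm{Elim}(Y)\neq S_n$ for every proper subset $Y\subsetneq S_n^0$.
   Context: $S_n$ is the set of all nonzero $n$-tuples in $\{-1,0,1\}^n$ whose first nonzero entry equals $1$. A tuple $t=(t_1,\dots,t_n)\in\{1,0,-1,u\}^n$ ($u$ a formal symbol) eliminates $s\in S_n$ if: (i) $t_i\neq0$ and $s_i\neq0$ for some $i$; (ii) there is $k\in\{+1,-1\}$ with $t_i=ks_i$ for all $i$ with $s_i\neq0$ and $t_i\neq0$; (iii) $s_i=0$ whenever $t_i=u$. For $X\subseteq S_n$, $\mathrm{Elim}(X)$ is the set of elements of $S_n$ eliminated by at least one element of $X$. *)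

theory Defs
  imports Main
begin

text \<open>n-tuples are lists of length n. Entries of a tuple t in {1,0,-1,u}^n are
  represented as int option: Some c for c in {1,0,-1}, None for the formal symbol u.\<close>

definition S :: "nat \<Rightarrow> int list set" where
  "S n = {s. length s = n \<and> set s \<subseteq> {-1, 0, 1} \<and>
             (\<exists>i<n. s ! i = 1 \<and> (\<forall>j<i. s ! j = 0))}"

definition S0 :: "nat \<Rightarrow> int list set" where
  "S0 n = {s \<in> S n. \<forall>i<n. s ! i \<noteq> 0}"

definition eliminates :: "int option list \<Rightarrow> int list \<Rightarrow> bool" where
  "eliminates t s \<longleftrightarrow> length t = length s \<and>
     (\<exists>i<length s. t ! i \<noteq> Some 0 \<and> s ! i \<noteq> 0) \<and>
     (\<exists>k\<in>{1, -1::int}. \<forall>i<length s. t ! i \<noteq> Some 0 \<and> s ! i \<noteq> 0 \<longrightarrow> t ! i = Some (k * s ! i)) \<and>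
     (\<forall>i<length s. t ! i = None \<longrightarrow> s ! i = 0)"

definition Elim :: "nat \<Rightarrow> int list set \<Rightarrow> int list set" where
  "Elim n X = {s \<in> S n. \<exists>t\<in>X. eliminates (map Some t) s}"

end

theory Submission
  imports Defs
begin

text \<open>Every s in S n is eliminated by the tuple of S0 n obtained from s by replacing each
  zero entry with 1, since elimination only compares positions where s is nonzero.
  Conversely, a full-support tuple t can eliminate a full-support s only if t = k s with
  k = 1 or k = -1, and the normalisation of the first entry forces k = 1. Hence each
  element of S0 n is eliminated by no other element of S0 n, so no proper subset of
  S0 n suffices.\<close>

lemma S0_subset_S: "S0 n \<subseteq> S n"
  unfolding S0_def by auto

lemma S_length: "s \<in> S n \<Longrightarrow> length s = n"
  unfolding S_def by auto

lemma S_nonempty_length: "s \<in> S n \<Longrightarrow> 0 < n"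
  unfolding S_def by auto

lemma S_nth_0: assumes "s \<in> S n" "s ! 0 \<noteq> 0" shows "s ! 0 = 1"
proof -
  from assms(1) obtain i where i: "s ! i = 1" "\<forall>j<i. s ! j = 0"
    unfolding S_def by auto
  with assms(2) have "i = 0" by (cases i) auto
  with i show ?thesis by simp
qed

lemma S0_nth_0: "s \<in> S0 n \<Longrightarrow> s ! 0 = 1"
  using S_nth_0 S_nonempty_length unfolding S0_def by blast

definition fill_zeros :: "int list \<Rightarrow> int list" where
  "fill_zeros s = map (\<lambda>x. if x = 0 then 1 else x) s"

lemma fill_zeros_in_S0: assumes "s \<in> S n" shows "fill_zeros s \<in> S0 n"
proof -
  have n: "0 < n" "length s = n" "set s \<subseteq> {-1, 0, 1}"
    using assms unfolding S_def by auto
  have "fill_zeros s ! 0 = 1"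
    using S_nth_0[OF assms] n unfolding fill_zeros_def by auto
  with n show ?thesis
    unfolding S0_def S_def fill_zeros_def by auto
qed

lemma eliminates_fill_zeros: assumes "s \<in> S n" shows "eliminates (map Some (fill_zeros s)) s"
proof -
  obtain i where "i < n" "s ! i = 1"
    using assms unfolding S_def by auto
  then show ?thesis
    using S_length[OF assms] unfolding eliminates_def fill_zeros_def
    by (auto intro!: bexI[where x = 1] exI[where x = i])
qed

lemma Elim_S0: "Elim n (S0 n) = S n"
  using fill_zeros_in_S0 eliminates_fill_zeros unfolding Elim_def by blast

lemma eliminates_full_support_eq:
  assumes elim: "eliminates (map Some t) s"
    and s_nz: "\<forall>i<length s. s ! i \<noteq> 0" and t_nz: "\<forall>i<length t. t ! i \<noteq> 0"
    and first: "0 < length s" "t ! 0 = s ! 0"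
  shows "t = s"
proof -
  from elim obtain k :: int where k: "k \<in> {1, -1}"
    and scaled: "\<forall>i<length s. map Some t ! i \<noteq> Some 0 \<and> s ! i \<noteq> 0 \<longrightarrow>
                   map Some t ! i = Some (k * s ! i)"
    and len: "length t = length s"
    unfolding eliminates_def by (metis length_map)
  have eq: "t ! i = k * s ! i" if "i < length s" for i
    using scaled s_nz t_nz len that by auto
  have "k = 1"
    using eq[of 0] first s_nz k by auto
  with eq len show ?thesis by (auto intro: nth_equalityI)
qed

lemma S0_eliminated_only_by_itself:
  assumes "s \<in> S0 n" "t \<in> S0 n" "eliminates (map Some t) s"
  shows "t = s"
proof (rule eliminates_full_support_eq[OF assms(3)])
  have "length s = n" "length t = n" "0 < n"
    using assms(1,2) S_length S_nonempty_length unfolding S0_def by auto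
  then show "\<forall>i<length s. s ! i \<noteq> 0" "\<forall>i<length t. t ! i \<noteq> 0" "0 < length s"
    using assms(1,2) unfolding S0_def by auto
  show "t ! 0 = s ! 0"
    using assms(1,2) S0_nth_0 by simp
qed

lemma Elim_proper_subset_S0:
  assumes "Y \<subset> S0 n" shows "Elim n Y \<noteq> S n"
proof -
  obtain s where s: "s \<in> S0 n" "s \<notin> Y"
    using assms by auto
  have "s \<notin> Elim n Y"
    using S0_eliminated_only_by_itself[OF s(1)] s(2) assms unfolding Elim_def by blast
  with s(1) S0_subset_S show ?thesis by blast
qed

theorem mainTheorem7:
  fixes n :: nat
  shows "S0 n \<subseteq> S n \<and> Elim n (S0 n) = S n \<and>
         (\<forall>Y. Y \<subset> S0 n \<longrightarrow> Elim n Y \<noteq> S n)"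
  using S0_subset_S Elim_S0 Elim_proper_subset_S0 by blast

end
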